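(* Let $a,b,c\in\mathcal V(\mathcal B)$ with $a\le_t b\le_t c$. Then (1) $(a\wedge\mathcal U)\otimes(c\vee\mathcal U)\le_k\mathcal U$; (2) $(a\vee\mathcal U)\otimes c\le_k b$; (3) $(a\wedge\mathcal U)\otimes(c\wedge\mathcal U)\le_k b$.
   Context: A bilattice $\langle\mathcal B,\le_t,\le_k\rangle$ is a nonempty set with two partial orders, each making $\mathcal B$ a lattice with top and bottom. Under $\le_t$, meet and join are $\wedge,\vee$, bottom $\mathcal F$, top $\mathcal T$; under $\le_k$, meet and join are $\otimes,\oplus$, bottom $\mathcal U$, top $\mathcal I$. Standing assumptions: $\mathcal B$ is complete for both orders, infinitely distributive, satisfies the (infinitary) interlacing conditions (each of $\wedge,\vee,\otimes,\oplus$ is monotone with respect to both orderings), and has a negation. $\mathcal V(\mathcal B)$ is the set of maps from ground atoms (of a fixed first-order language) to $\mathcal B$ with pointwise orders and operations; $\mathcal U$ also denotes the constant map with value $\mathcal U$. *)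

theory Defs
  imports Main
begin

text \<open>A bilattice is represented by its carrier type 'b together with the two
orders lt (truth order) and lk (knowledge order) and a negation neg.\<close>

definition is_lub :: "('b \<Rightarrow> 'b \<Rightarrow> bool) \<Rightarrow> 'b set \<Rightarrow> 'b \<Rightarrow> bool" where
  "is_lub le A x \<longleftrightarrow> (\<forall>a\<in>A. le a x) \<and> (\<forall>y. (\<forall>a\<in>A. le a y) \<longrightarrow> le x y)"

definition is_glb :: "('b \<Rightarrow> 'b \<Rightarrow> bool) \<Rightarrow> 'b set \<Rightarrow> 'b \<Rightarrow> bool" where
  "is_glb le A x \<longleftrightarrow> (\<forall>a\<in>A. le x a) \<and> (\<forall>y. (\<forall>a\<in>A. le y a) \<longrightarrow> le y x)"

definition lsup :: "('b \<Rightarrow> 'b \<Rightarrow> bool) \<Rightarrow> 'b set \<Rightarrow> 'b" where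
  "lsup le A = (THE x. is_lub le A x)"

definition linf :: "('b \<Rightarrow> 'b \<Rightarrow> bool) \<Rightarrow> 'b set \<Rightarrow> 'b" where
  "linf le A = (THE x. is_glb le A x)"

definition bjoin :: "('b \<Rightarrow> 'b \<Rightarrow> bool) \<Rightarrow> 'b \<Rightarrow> 'b \<Rightarrow> 'b" where
  "bjoin le x y = lsup le {x, y}"

definition bmeet :: "('b \<Rightarrow> 'b \<Rightarrow> bool) \<Rightarrow> 'b \<Rightarrow> 'b \<Rightarrow> 'b" where
  "bmeet le x y = linf le {x, y}"

definition btop :: "('b \<Rightarrow> 'b \<Rightarrow> bool) \<Rightarrow> 'b" where
  "btop le = lsup le UNIV"

definition bbot :: "('b \<Rightarrow> 'b \<Rightarrow> bool) \<Rightarrow> 'b" where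
  "bbot le = linf le UNIV"

definition porder :: "('b \<Rightarrow> 'b \<Rightarrow> bool) \<Rightarrow> bool" where
  "porder le \<longleftrightarrow> (\<forall>x. le x x) \<and> (\<forall>x y z. le x y \<longrightarrow> le y z \<longrightarrow> le x z)
     \<and> (\<forall>x y. le x y \<longrightarrow> le y x \<longrightarrow> x = y)"

definition complete_order :: "('b \<Rightarrow> 'b \<Rightarrow> bool) \<Rightarrow> bool" where
  "complete_order le \<longleftrightarrow> porder le \<and> (\<forall>A. \<exists>x. is_lub le A x) \<and> (\<forall>A. \<exists>x. is_glb le A x)"

text \<open>A family is represented by its set S of pairs.\<close>
definition inf_monotone :: "('b \<Rightarrow> 'b \<Rightarrow> bool) \<Rightarrow> ('b set \<Rightarrow> 'b) \<Rightarrow> bool" where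
  "inf_monotone le Phi \<longleftrightarrow>
     (\<forall>S. (\<forall>(x, y)\<in>S. le x y) \<longrightarrow> le (Phi (fst ` S)) (Phi (snd ` S)))"

definition bilattice :: "('b \<Rightarrow> 'b \<Rightarrow> bool) \<Rightarrow> ('b \<Rightarrow> 'b \<Rightarrow> bool) \<Rightarrow> ('b \<Rightarrow> 'b) \<Rightarrow> bool" where
  "bilattice lt lk neg \<longleftrightarrow>
     complete_order lt \<and> complete_order lk \<and>
     (\<forall>Phi\<in>{linf lt, lsup lt, linf lk, lsup lk}. \<forall>le\<in>{lt, lk}. inf_monotone le Phi) \<and>
     (\<forall>op\<in>{bmeet lt, bjoin lt, bmeet lk, bjoin lk}. \<forall>Phi\<in>{linf lt, lsup lt, linf lk, lsup lk}.
        \<forall>a B. B \<noteq> {} \<longrightarrow> op a (Phi B) = Phi (op a ` B)) \<and>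
     (\<forall>x y. lt x y \<longrightarrow> lt (neg y) (neg x)) \<and>
     (\<forall>x y. lk x y \<longrightarrow> lk (neg x) (neg y)) \<and>
     (\<forall>x. neg (neg x) = x)"

text \<open>V(B): maps from ground atoms (type 'g) to B, pointwise orders and operations.\<close>
definition pw_le :: "('b \<Rightarrow> 'b \<Rightarrow> bool) \<Rightarrow> ('g \<Rightarrow> 'b) \<Rightarrow> ('g \<Rightarrow> 'b) \<Rightarrow> bool" where
  "pw_le le v w \<longleftrightarrow> (\<forall>p. le (v p) (w p))"

definition pw :: "('b \<Rightarrow> 'b \<Rightarrow> 'b) \<Rightarrow> ('g \<Rightarrow> 'b) \<Rightarrow> ('g \<Rightarrow> 'b) \<Rightarrow> ('g \<Rightarrow> 'b)" where
  "pw f v w = (\<lambda>p. f (v p) (w p))"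

end

theory Submission
  imports Defs
begin

lemma complete_order_refl: "complete_order le \<Longrightarrow> le x x"
  by (simp add: complete_order_def porder_def)

lemma complete_order_trans: "complete_order le \<Longrightarrow> le x y \<Longrightarrow> le y z \<Longrightarrow> le x z"
  unfolding complete_order_def porder_def by blast

lemma complete_order_antisym: "complete_order le \<Longrightarrow> le x y \<Longrightarrow> le y x \<Longrightarrow> x = y"
  unfolding complete_order_def porder_def by blast

lemma is_lub_lsup:
  assumes "complete_order le"
  shows "is_lub le A (lsup le A)"
proof -
  from assms obtain x where x: "is_lub le A x"
    by (auto simp: complete_order_def)
  moreover have "y = x" if "is_lub le A y" for y
    using x that complete_order_antisym[OF assms] unfolding is_lub_def by blast
  ultimately show ?thesis
    unfolding lsup_def by (rule theI)
qed

lemma is_glb_linf: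
  assumes "complete_order le"
  shows "is_glb le A (linf le A)"
proof -
  from assms obtain x where x: "is_glb le A x"
    by (auto simp: complete_order_def)
  moreover have "y = x" if "is_glb le A y" for y
    using x that complete_order_antisym[OF assms] unfolding is_glb_def by blast
  ultimately show ?thesis
    unfolding linf_def by (rule theI)
qed

lemma bjoin_upper1: "complete_order le \<Longrightarrow> le x (bjoin le x y)"
  using is_lub_lsup[of le "{x, y}"] by (simp add: bjoin_def is_lub_def)

lemma bjoin_upper2: "complete_order le \<Longrightarrow> le y (bjoin le x y)"
  using is_lub_lsup[of le "{x, y}"] by (simp add: bjoin_def is_lub_def)

lemma bmeet_lower1: "complete_order le \<Longrightarrow> le (bmeet le x y) x"
  using is_glb_linf[of le "{x, y}"] by (simp add: bmeet_def is_glb_def)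

lemma bmeet_lower2: "complete_order le \<Longrightarrow> le (bmeet le x y) y"
  using is_glb_linf[of le "{x, y}"] by (simp add: bmeet_def is_glb_def)

lemma bjoin_commute: "bjoin le x y = bjoin le y x"
  by (simp add: bjoin_def insert_commute)

lemma bmeet_commute: "bmeet le x y = bmeet le y x"
  by (simp add: bmeet_def insert_commute)

lemma bjoin_absorb2:
  assumes "complete_order le" and "le x y"
  shows "bjoin le x y = y"
proof (rule complete_order_antisym[OF assms(1)])
  show "le (bjoin le x y) y"
    using is_lub_lsup[OF assms(1), of "{x, y}"] assms
    by (simp add: bjoin_def is_lub_def complete_order_refl)
  show "le y (bjoin le x y)"
    using assms(1) by (rule bjoin_upper2)
qed

lemma bmeet_absorb1:
  assumes "complete_order le" and "le x y"
  shows "bmeet le x y = x"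
proof (rule complete_order_antisym[OF assms(1)])
  show "le (bmeet le x y) x"
    using assms(1) by (rule bmeet_lower1)
  show "le x (bmeet le x y)"
    using is_glb_linf[OF assms(1), of "{x, y}"] assms
    by (simp add: bmeet_def is_glb_def complete_order_refl)
qed

lemma bbot_least: "complete_order le \<Longrightarrow> le (bbot le) x"
  using is_glb_linf[of le UNIV] by (simp add: bbot_def is_glb_def)

lemma inf_monotone_pair:
  assumes "inf_monotone le Phi" and "le x1 y1" and "le x2 y2"
  shows "le (Phi {x1, x2}) (Phi {y1, y2})"
proof -
  have "le (Phi (fst ` {(x1, y1), (x2, y2)})) (Phi (snd ` {(x1, y1), (x2, y2)}))"
    using assms(1) unfolding inf_monotone_def
    by (rule allE[where x = "{(x1, y1), (x2, y2)}"]) (use assms(2,3) in simp)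
  then show ?thesis by simp
qed

locale interlaced_lattices =
  fixes lt lk :: "'b \<Rightarrow> 'b \<Rightarrow> bool"
  assumes complete_t: "complete_order lt"
    and complete_k: "complete_order lk"
    and tjoin_k_mono: "lk x1 y1 \<Longrightarrow> lk x2 y2 \<Longrightarrow> lk (bjoin lt x1 x2) (bjoin lt y1 y2)"
    and tmeet_k_mono: "lk x1 y1 \<Longrightarrow> lk x2 y2 \<Longrightarrow> lk (bmeet lt x1 x2) (bmeet lt y1 y2)"

lemma bilattice_interlaced_lattices:
  assumes "bilattice lt lk neg"
  shows "interlaced_lattices lt lk"
proof
  have mono: "inf_monotone lk (lsup lt)" "inf_monotone lk (linf lt)"
    using assms by (simp_all add: bilattice_def)
  show "complete_order lt" "complete_order lk"
    using assms by (simp_all add: bilattice_def)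
  show "lk (bjoin lt x1 x2) (bjoin lt y1 y2)" if "lk x1 y1" "lk x2 y2" for x1 x2 y1 y2
    using inf_monotone_pair[OF mono(1) that] by (simp add: bjoin_def)
  show "lk (bmeet lt x1 x2) (bmeet lt y1 y2)" if "lk x1 y1" "lk x2 y2" for x1 x2 y1 y2
    using inf_monotone_pair[OF mono(2) that] by (simp add: bmeet_def)
qed

context interlaced_lattices
begin

abbreviation unknown :: 'b where
  "unknown \<equiv> bbot lk"

lemma unknown_k_least: "lk unknown x"
  using complete_k by (rule bbot_least)

lemma kmeet_tmeet_unknown_tjoin_unknown_k_le_unknown:
  "lk (bmeet lk (bmeet lt x unknown) (bjoin lt z unknown)) unknown"
proof -
  let ?w = "bmeet lk (bmeet lt x unknown) (bjoin lt z unknown)"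
  \<comment> \<open>Write \<open>?w\<close> as the truth-meet of \<open>unknown \<or>\<^sub>t ?w\<close> and \<open>?w\<close>, then bound each
     \<open>?w\<close> by one of its two knowledge-factors; the result collapses to \<open>unknown\<close>.\<close>
  have "?w = bmeet lt (bjoin lt unknown ?w) ?w"
    using bmeet_absorb1[OF complete_t bjoin_upper2[OF complete_t], of ?w unknown]
    by (metis bmeet_commute)
  also have "lk \<dots> (bmeet lt (bjoin lt unknown (bmeet lt x unknown)) (bjoin lt z unknown))"
    using complete_order_refl[OF complete_k] bmeet_lower1[OF complete_k] bmeet_lower2[OF complete_k]
    by (rule tmeet_k_mono[OF tjoin_k_mono])
  also have "bjoin lt unknown (bmeet lt x unknown) = unknown"
    using bjoin_absorb2[OF complete_t bmeet_lower2[OF complete_t]]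
    by (simp add: bjoin_commute)
  also have "bmeet lt unknown (bjoin lt z unknown) = unknown"
    using bmeet_absorb1[OF complete_t bjoin_upper2[OF complete_t]] .
  finally show ?thesis .
qed

lemma kmeet_tjoin_unknown_k_le:
  assumes "lt x y"
  shows "lk (bmeet lk (bjoin lt x unknown) z) y"
proof -
  have "lk (bjoin lt x unknown) (bjoin lt x y)"
    using complete_order_refl[OF complete_k] unknown_k_least by (rule tjoin_k_mono)
  also have "bjoin lt x y = y"
    using complete_t assms by (rule bjoin_absorb2)
  finally show ?thesis
    using complete_order_trans[OF complete_k bmeet_lower1[OF complete_k]] by blast
qed

lemma kmeet_tmeet_unknown_k_le:
  assumes "lt y z"
  shows "lk (bmeet lk x (bmeet lt z unknown)) y"
proof -
  have "lk (bmeet lt z unknown) (bmeet lt z y)"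
    using complete_order_refl[OF complete_k] unknown_k_least by (rule tmeet_k_mono)
  also have "bmeet lt z y = y"
    using bmeet_absorb1[OF complete_t assms] by (simp add: bmeet_commute)
  finally show ?thesis
    using complete_order_trans[OF complete_k bmeet_lower2[OF complete_k]] by blast
qed

end

theorem mainTheorem10:
  fixes lt lk :: "'b \<Rightarrow> 'b \<Rightarrow> bool" and neg :: "'b \<Rightarrow> 'b"
    and a b c :: "'g \<Rightarrow> 'b"
  assumes "bilattice lt lk neg"
    and "pw_le lt a b" and "pw_le lt b c"
  shows "pw_le lk (pw (bmeet lk) (pw (bmeet lt) a (\<lambda>_. bbot lk)) (pw (bjoin lt) c (\<lambda>_. bbot lk)))
            (\<lambda>_. bbot lk)
       \<and> pw_le lk (pw (bmeet lk) (pw (bjoin lt) a (\<lambda>_. bbot lk)) c) b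
       \<and> pw_le lk (pw (bmeet lk) (pw (bmeet lt) a (\<lambda>_. bbot lk)) (pw (bmeet lt) c (\<lambda>_. bbot lk))) b"
proof -
  interpret interlaced_lattices lt lk
    using assms(1) by (rule bilattice_interlaced_lattices)
  have ab: "lt (a p) (b p)" and bc: "lt (b p) (c p)" for p
    using assms(2,3) by (simp_all add: pw_le_def)
  have "lk (bmeet lk (bmeet lt (a p) unknown) (bjoin lt (c p) unknown)) unknown"
    and "lk (bmeet lk (bjoin lt (a p) unknown) (c p)) (b p)"
    and "lk (bmeet lk (bmeet lt (a p) unknown) (bmeet lt (c p) unknown)) (b p)" for p
    by (rule kmeet_tmeet_unknown_tjoin_unknown_k_le_unknown kmeet_tjoin_unknown_k_le[OF ab]
        kmeet_tmeet_unknown_k_le[OF bc])+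
  then show ?thesis
    unfolding pw_le_def pw_def by blast
qed

end
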